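(* Let $s\in(0,1)$ and $\boldsymbol\mu\in(\mathbb{R}^d)^M$, and let $\boldsymbol\mu^{\mathrm{new}}=\boldsymbol\mu+s\nabla\mathcal{L}(\boldsymbol\mu)$ be the first-order EM update. Then $$\mathcal{L}(\boldsymbol\mu^{\mathrm{new}})\ge\mathcal{L}(\boldsymbol\mu)+\frac{s}{2}\|\nabla\mathcal{L}(\boldsymbol\mu)\|_2^2.$$ In particular, the update strictly increases $\mathcal{L}$ whenever $\nabla\mathcal{L}(\boldsymbol\mu)\neq0$.
   Context: Write $\phi(x \mid \mu, I)$ for the density of $\mathcal{N}(\mu,I)$ on $\mathbb{R}^d$. For fixed true centers $\mu_1^*,\dots,\mu_M^*\in\mathbb{R}^d$, $X$ is distributed according to the mixture with density $\frac1M\sum_i\phi(x\mid\mu_i^*,I)$. The population log-likelihood is $$\mathcal{L}(\boldsymbol{\mu}) = \mathbb{E}\log\Big(\frac1M\sum_{i=1}^M \phi(X\mid \mu_i, I)\Big).$$ The gradient block for $\mu_i$ is $\nabla_{\mu_i}\mathcal{L}(\boldsymbol\mu)=\mathbb{E}[w_i(X)(X-\mu_i)]$, where $$w_i(x)=\frac{\phi(x\mid\mu_i,I)}{\sum_j\phi(x\mid\mu_j,I)}.$$ *)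

theory Defs
  imports "HOL-Analysis.Analysis"
begin

text \<open>Dimension d is the finite index type 'd (d = CARD('d)); the number of
components M is the finite index type 'm (M = CARD('m)).  A parameter
boldface mu in (R^d)^M is a function 'm => real^'d.\<close>

definition gauss_pdf :: "real^'d \<Rightarrow> real^'d \<Rightarrow> real" where
  "gauss_pdf x \<mu> = (2 * pi) powr (- real CARD('d) / 2) * exp (- (norm (x - \<mu>))\<^sup>2 / 2)"

definition mix_pdf :: "('m::finite \<Rightarrow> real^'d) \<Rightarrow> real^'d \<Rightarrow> real" where
  "mix_pdf \<mu> x = (1 / real CARD('m)) * (\<Sum>i\<in>UNIV. gauss_pdf x (\<mu> i))"

text \<open>Population log-likelihood: expectation of log(mixture density at mu) when
X has the mixture density with true centers mustar.\<close>
definition pop_loglik :: "('m::finite \<Rightarrow> real^'d) \<Rightarrow> ('m \<Rightarrow> real^'d) \<Rightarrow> real" where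
  "pop_loglik \<mu>star \<mu> = (\<integral>x. mix_pdf \<mu>star x * ln (mix_pdf \<mu> x) \<partial>lborel)"

definition resp :: "('m::finite \<Rightarrow> real^'d) \<Rightarrow> 'm \<Rightarrow> real^'d \<Rightarrow> real" where
  "resp \<mu> i x = gauss_pdf x (\<mu> i) / (\<Sum>j\<in>UNIV. gauss_pdf x (\<mu> j))"

text \<open>Gradient block for mu_i: E[w_i(X)(X - mu_i)], X ~ mixture with centers mustar.\<close>
definition grad_loglik :: "('m::finite \<Rightarrow> real^'d) \<Rightarrow> ('m \<Rightarrow> real^'d) \<Rightarrow> 'm \<Rightarrow> real^'d" where
  "grad_loglik \<mu>star \<mu> i = (\<integral>x. (mix_pdf \<mu>star x * resp \<mu> i x) *\<^sub>R (x - \<mu> i) \<partial>lborel)"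

definition grad_norm_sq :: "('m::finite \<Rightarrow> real^'d) \<Rightarrow> ('m \<Rightarrow> real^'d) \<Rightarrow> real" where
  "grad_norm_sq \<mu>star \<mu> = (\<Sum>i\<in>UNIV. (norm (grad_loglik \<mu>star \<mu> i))\<^sup>2)"

end

theory Submission
  imports Defs "HOL-Probability.Distributions"
begin

text \<open>Translating every centre by \<open>v\<^sub>i\<close> multiplies the \<open>i\<close>-th Gaussian at \<open>x\<close> by
\<open>exp (v\<^sub>i \<bullet> (x - \<mu>\<^sub>i) - \<bar>v\<^sub>i\<bar>\<^sup>2/2)\<close>, so the new mixture density is the old one times the
responsibility-weighted average of these factors. Jensen's inequality for \<open>exp\<close> turns
this into the pointwise bound
\<open>ln p\<^sub>\<mu>\<^sub>+\<^sub>v(x) \<ge> ln p\<^sub>\<mu>(x) + \<Sum>\<^sub>i w\<^sub>i(x) v\<^sub>i \<bullet> (x - \<mu>\<^sub>i) - \<Sum>\<^sub>i \<bar>v\<^sub>i\<bar>\<^sup>2/2\<close>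
(using \<open>w\<^sub>i \<le> 1\<close>), and integrating against the true mixture gives
\<open>\<L>(\<mu> + v) \<ge> \<L>(\<mu>) + \<langle>v, \<nabla>\<L>(\<mu>)\<rangle> - \<bar>v\<bar>\<^sup>2/2\<close>. For \<open>v = s \<nabla>\<L>(\<mu>)\<close> the gain is
\<open>(s - s\<^sup>2/2) \<bar>\<nabla>\<L>(\<mu>)\<bar>\<^sup>2 \<ge> s/2 \<bar>\<nabla>\<L>(\<mu>)\<bar>\<^sup>2\<close>. Gaussian second moments make all
integrals involved finite.\<close>

lemma has_bochner_integral_lborel_prod:
  fixes f :: "'a::euclidean_space \<Rightarrow> real \<Rightarrow> real"
  assumes int: "\<And>b. b \<in> Basis \<Longrightarrow> integrable lborel (f b)"
    and nonneg: "\<And>b t. b \<in> Basis \<Longrightarrow> 0 \<le> f b t"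
  shows "has_bochner_integral lborel (\<lambda>x. \<Prod>b\<in>Basis. f b (x \<bullet> b)) (\<Prod>b\<in>Basis. integral\<^sup>L lborel (f b))"
proof (rule has_bochner_integral_nn_integral)
  have meas [measurable]: "b \<in> Basis \<Longrightarrow> f b \<in> borel_measurable borel" for b
    using borel_measurable_integrable[OF int] by simp
  have integral_f_nonneg: "b \<in> Basis \<Longrightarrow> 0 \<le> integral\<^sup>L lborel (f b)" for b
    by (intro integral_nonneg_AE AE_I2 nonneg)
  show "(\<lambda>x. \<Prod>b\<in>Basis. f b (x \<bullet> b)) \<in> borel_measurable lborel"
    by measurable
  have "(\<integral>\<^sup>+x. ennreal (\<Prod>b\<in>Basis. f b (x \<bullet> b)) \<partial>lborel)
      = (\<integral>\<^sup>+x. (\<Prod>b\<in>Basis. ennreal (f b (x \<bullet> b))) \<partial>lborel)"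
    by (simp add: prod_ennreal nonneg)
  also have "\<dots> = (\<Prod>b\<in>Basis. \<integral>\<^sup>+t. ennreal (f b t) \<partial>lborel)"
    by (rule nn_integral_lborel_prod) auto
  also have "\<dots> = (\<Prod>b\<in>Basis. ennreal (integral\<^sup>L lborel (f b)))"
    by (intro prod.cong refl nn_integral_eq_integral int AE_I2 nonneg)
  finally show "(\<integral>\<^sup>+x. ennreal (\<Prod>b\<in>Basis. f b (x \<bullet> b)) \<partial>lborel) = ennreal (\<Prod>b\<in>Basis. integral\<^sup>L lborel (f b))"
    by (simp add: prod_ennreal integral_f_nonneg)
  show "AE x in lborel. 0 \<le> (\<Prod>b\<in>Basis. f b (x \<bullet> b))"
    by (simp add: nonneg prod_nonneg)
  show "0 \<le> (\<Prod>b\<in>Basis. integral\<^sup>L lborel (f b))"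
    by (simp add: integral_f_nonneg prod_nonneg)
qed

lemma power2_norm_eq_sum_Basis: "(norm (y::'a::euclidean_space))\<^sup>2 = (\<Sum>b\<in>Basis. (y \<bullet> b)\<^sup>2)"
  by (simp add: euclidean_inner[of y y, symmetric] power2_eq_square flip: power2_norm_eq_inner)

lemma gauss_pdf_pos: "0 < gauss_pdf x \<mu>"
  by (simp add: gauss_pdf_def)

lemma gauss_pdf_le_1: "gauss_pdf x (\<mu>::real^'d) \<le> 1"
proof -
  have "1 \<le> (2 * pi) powr (real CARD('d) / 2)"
    using pi_gt3 by (intro ge_one_powr_ge_zero) auto
  then have "(2 * pi) powr (- real CARD('d) / 2) \<le> 1"
    by (simp add: powr_minus_divide divide_le_eq_1)
  then show ?thesis
    unfolding gauss_pdf_def by (intro mult_le_one) auto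
qed

lemma borel_measurable_gauss_pdf [measurable]: "(\<lambda>x. gauss_pdf x \<mu>) \<in> borel_measurable borel"
  unfolding gauss_pdf_def by measurable

lemma gauss_pdf_eq_prod_normal_density:
  fixes x \<mu> :: "real^'d"
  shows "gauss_pdf x \<mu> = (\<Prod>b\<in>Basis. normal_density (\<mu> \<bullet> b) 1 (x \<bullet> b))"
proof -
  have "(\<Prod>b\<in>Basis. normal_density (\<mu> \<bullet> b) 1 (x \<bullet> b))
      = (\<Prod>b\<in>Basis. 1 / sqrt (2 * pi) * exp (- ((x - \<mu>) \<bullet> b)\<^sup>2 / 2))"
    by (simp add: normal_density_def inner_diff_left)
  also have "\<dots> = (\<Prod>b\<in>(Basis::(real^'d) set). 1 / sqrt (2 * pi)) * (\<Prod>b\<in>Basis. exp (- ((x - \<mu>) \<bullet> b)\<^sup>2 / 2))"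
    by (rule prod.distrib)
  also have "(\<Prod>b\<in>Basis. exp (- ((x - \<mu>) \<bullet> b)\<^sup>2 / 2)) = exp (- (norm (x - \<mu>))\<^sup>2 / 2)"
    by (simp add: power2_norm_eq_sum_Basis exp_sum[symmetric] sum_negf sum_divide_distrib)
  also have "(\<Prod>b\<in>(Basis::(real^'d) set). 1 / sqrt (2 * pi)) = ((2 * pi) powr (-1/2)) ^ CARD('d)"
    by (simp add: powr_minus_divide powr_half_sqrt)
  also have "\<dots> = (2 * pi) powr (- real CARD('d) / 2)"
    by (simp add: powr_realpow[symmetric] powr_powr)
  finally show ?thesis
    by (simp add: gauss_pdf_def)
qed

lemma has_bochner_integral_gauss_pdf: "has_bochner_integral lborel (\<lambda>x::real^'d. gauss_pdf x \<mu>) 1"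
  using has_bochner_integral_lborel_prod[of "\<lambda>b. normal_density (\<mu> \<bullet> b) 1"]
  by (simp add: gauss_pdf_eq_prod_normal_density)

lemma integrable_gauss_pdf: "integrable lborel (\<lambda>x::real^'d. gauss_pdf x \<mu>)"
  using has_bochner_integral_gauss_pdf by (rule integrable.intros)

lemma integral_gauss_pdf: "(\<integral>x. gauss_pdf x \<mu> \<partial>lborel) = (1::real)"
  using has_bochner_integral_gauss_pdf by (rule has_bochner_integral_integral_eq)

lemma integrable_gauss_pdf_mult_norm_sq_centred:
  fixes \<mu> :: "real^'d"
  shows "integrable lborel (\<lambda>x. gauss_pdf x \<mu> * (norm (x - \<mu>))\<^sup>2)"
proof -
  define f where "f c b t = normal_density (\<mu> \<bullet> b) 1 t * (if b = c then (t - \<mu> \<bullet> b)\<^sup>2 else 1)"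
    for c b :: "real^'d" and t
  have sum_prod: "gauss_pdf x \<mu> * (norm (x - \<mu>))\<^sup>2 = (\<Sum>c\<in>Basis. \<Prod>b\<in>Basis. f c b (x \<bullet> b))" for x
  proof -
    have "gauss_pdf x \<mu> * (norm (x - \<mu>))\<^sup>2 = (\<Sum>c\<in>Basis. gauss_pdf x \<mu> * ((x - \<mu>) \<bullet> c)\<^sup>2)"
      by (simp add: power2_norm_eq_sum_Basis sum_distrib_left)
    also have "\<dots> = (\<Sum>c\<in>Basis. \<Prod>b\<in>Basis. f c b (x \<bullet> b))"
      by (intro sum.cong refl)
         (simp add: f_def prod.distrib prod.delta inner_diff_left gauss_pdf_eq_prod_normal_density)
    finally show ?thesis .
  qed
  have int_f: "integrable lborel (f c b)" for c b
    using integrable_normal_moment[of 1 "\<mu> \<bullet> b" 2] by (cases "b = c") (simp_all add: f_def[abs_def])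
  have "integrable lborel (\<lambda>x. \<Prod>b\<in>Basis. f c b (x \<bullet> b))" for c
    by (intro integrable.intros[OF has_bochner_integral_lborel_prod] int_f) (simp add: f_def)
  then show ?thesis
    by (simp add: sum_prod)
qed

lemma integrable_gauss_pdf_mult_norm_sq:
  fixes \<mu> c :: "real^'d"
  shows "integrable lborel (\<lambda>x. gauss_pdf x \<mu> * (norm (x - c))\<^sup>2)"
proof (rule Bochner_Integration.integrable_bound)
  show "integrable lborel (\<lambda>x. 2 * (gauss_pdf x \<mu> * (norm (x - \<mu>))\<^sup>2) + 2 * (norm (\<mu> - c))\<^sup>2 * gauss_pdf x \<mu>)"
    by (intro Bochner_Integration.integrable_add Bochner_Integration.integrable_mult_right
        integrable_gauss_pdf integrable_gauss_pdf_mult_norm_sq_centred)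
  show "AE x in lborel. norm (gauss_pdf x \<mu> * (norm (x - c))\<^sup>2)
      \<le> norm (2 * (gauss_pdf x \<mu> * (norm (x - \<mu>))\<^sup>2) + 2 * (norm (\<mu> - c))\<^sup>2 * gauss_pdf x \<mu>)"
  proof (rule AE_I2)
    fix x
    have "norm (x - c) \<le> norm (x - \<mu>) + norm (\<mu> - c)"
      using norm_triangle_ineq[of "x - \<mu>" "\<mu> - c"] by simp
    then have "(norm (x - c))\<^sup>2 \<le> (norm (x - \<mu>) + norm (\<mu> - c))\<^sup>2"
      by (simp add: power_mono)
    also have "\<dots> \<le> 2 * (norm (x - \<mu>))\<^sup>2 + 2 * (norm (\<mu> - c))\<^sup>2"
      using sum_squares_bound[of "norm (x - \<mu>)" "norm (\<mu> - c)"] by (simp add: power2_sum)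
    finally have "gauss_pdf x \<mu> * (norm (x - c))\<^sup>2
        \<le> gauss_pdf x \<mu> * (2 * (norm (x - \<mu>))\<^sup>2 + 2 * (norm (\<mu> - c))\<^sup>2)"
      using gauss_pdf_pos[of x \<mu>] by (simp add: mult_left_mono)
    then show "norm (gauss_pdf x \<mu> * (norm (x - c))\<^sup>2)
        \<le> norm (2 * (gauss_pdf x \<mu> * (norm (x - \<mu>))\<^sup>2) + 2 * (norm (\<mu> - c))\<^sup>2 * gauss_pdf x \<mu>)"
      using gauss_pdf_pos[of x \<mu>] by (simp add: algebra_simps)
  qed
qed simp

lemma sum_gauss_pdf_pos:
  fixes \<nu> :: "'m::finite \<Rightarrow> real^'d"
  shows "0 < (\<Sum>j\<in>UNIV. gauss_pdf x (\<nu> j))"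
  by (intro sum_pos gauss_pdf_pos) auto

lemma mix_pdf_pos: "0 < mix_pdf \<nu> x"
  using sum_gauss_pdf_pos[of x \<nu>] by (simp add: mix_pdf_def)

lemma borel_measurable_mix_pdf [measurable]: "mix_pdf \<nu> \<in> borel_measurable borel"
  unfolding mix_pdf_def[abs_def] by measurable

lemma integrable_mix_pdf: "integrable lborel (mix_pdf (\<nu>::'m::finite \<Rightarrow> real^'d))"
  unfolding mix_pdf_def[abs_def]
  by (intro Bochner_Integration.integrable_mult_right Bochner_Integration.integrable_sum integrable_gauss_pdf)

lemma integral_mix_pdf: "(\<integral>x. mix_pdf (\<nu>::'m::finite \<Rightarrow> real^'d) x \<partial>lborel) = 1"
  by (simp add: mix_pdf_def integral_sum integrable_gauss_pdf integral_gauss_pdf)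

lemma integrable_mix_pdf_mult_norm_sq:
  fixes \<nu> :: "'m::finite \<Rightarrow> real^'d"
  shows "integrable lborel (\<lambda>x. mix_pdf \<nu> x * (K + (norm (x - c))\<^sup>2))"
proof -
  have "integrable lborel (\<lambda>x. 1 / real CARD('m) *
          (\<Sum>i\<in>UNIV. K * gauss_pdf x (\<nu> i) + gauss_pdf x (\<nu> i) * (norm (x - c))\<^sup>2))"
    by (intro Bochner_Integration.integrable_mult_right Bochner_Integration.integrable_sum
        Bochner_Integration.integrable_add integrable_gauss_pdf integrable_gauss_pdf_mult_norm_sq)
  then show ?thesis
    by (simp add: mix_pdf_def sum.distrib sum_distrib_left sum_distrib_right algebra_simps)
qed

lemma borel_measurable_resp [measurable]: "(\<lambda>x. resp \<nu> i x) \<in> borel_measurable borel"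
  unfolding resp_def by measurable

lemma resp_nonneg: "0 \<le> resp \<nu> i x"
  using sum_gauss_pdf_pos[of x \<nu>] gauss_pdf_pos[of x "\<nu> i"] by (simp add: resp_def)

lemma resp_le_1: "resp \<nu> i x \<le> 1"
proof -
  have "gauss_pdf x (\<nu> i) \<le> (\<Sum>j\<in>UNIV. gauss_pdf x (\<nu> j))"
    by (rule member_le_sum) (auto intro: less_imp_le gauss_pdf_pos)
  then show ?thesis
    using sum_gauss_pdf_pos[of x \<nu>] by (simp add: resp_def)
qed

lemma sum_resp: "(\<Sum>i\<in>UNIV. resp \<nu> i x) = 1"
  using sum_gauss_pdf_pos[of x \<nu>] by (simp add: resp_def flip: sum_divide_distrib)

text \<open>The mixture density lies between \<open>gauss_pdf x (\<nu> j) / M\<close> and \<open>1\<close>, so \<open>\<bar>ln\<bar>\<close> of it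
grows at most quadratically.\<close>
lemma abs_ln_mix_pdf_le:
  fixes \<nu> :: "'m::finite \<Rightarrow> real^'d"
  shows "\<bar>ln (mix_pdf \<nu> x)\<bar> \<le> ln (real CARD('m)) + real CARD('d) / 2 * ln (2 * pi) + (norm (x - \<nu> j))\<^sup>2"
proof -
  have M: "1 \<le> real CARD('m)"
    by simp
  have "(\<Sum>i\<in>UNIV. gauss_pdf x (\<nu> i)) \<le> (\<Sum>i\<in>(UNIV::'m set). 1)"
    by (intro sum_mono gauss_pdf_le_1)
  then have "mix_pdf \<nu> x \<le> 1"
    by (simp add: mix_pdf_def)
  then have upper: "ln (mix_pdf \<nu> x) \<le> 0"
    using mix_pdf_pos[of \<nu> x] by simp
  have "gauss_pdf x (\<nu> j) \<le> (\<Sum>i\<in>UNIV. gauss_pdf x (\<nu> i))"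
    by (rule member_le_sum) (auto intro: less_imp_le gauss_pdf_pos)
  then have "gauss_pdf x (\<nu> j) / real CARD('m) \<le> mix_pdf \<nu> x"
    using M by (simp add: mix_pdf_def divide_right_mono)
  then have "ln (gauss_pdf x (\<nu> j) / real CARD('m)) \<le> ln (mix_pdf \<nu> x)"
    using gauss_pdf_pos[of x "\<nu> j"] mix_pdf_pos[of \<nu> x] by (subst ln_le_cancel_iff) auto
  also have "ln (gauss_pdf x (\<nu> j) / real CARD('m))
      = - (real CARD('d) / 2) * ln (2 * pi) - (norm (x - \<nu> j))\<^sup>2 / 2 - ln (real CARD('m))"
    using M by (simp add: ln_div gauss_pdf_def ln_mult)
  finally have lower: "\<dots> \<le> ln (mix_pdf \<nu> x)" .
  have "0 \<le> real CARD('d) / 2 * ln (2 * pi)" "0 \<le> ln (real CARD('m))"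
    using pi_gt3 M by simp_all
  then show ?thesis
    using upper lower zero_le_power2[of "norm (x - \<nu> j)"] by linarith
qed

lemma integrable_pop_loglik_integrand:
  fixes \<mu>star \<nu> :: "'m::finite \<Rightarrow> real^'d"
  shows "integrable lborel (\<lambda>x. mix_pdf \<mu>star x * ln (mix_pdf \<nu> x))"
proof -
  fix j :: 'm
  define K where "K = ln (real CARD('m)) + real CARD('d) / 2 * ln (2 * pi)"
  have bound: "norm (mix_pdf \<mu>star x * ln (mix_pdf \<nu> x)) \<le> norm (mix_pdf \<mu>star x * (K + (norm (x - \<nu> j))\<^sup>2))" for x
  proof -
    have "\<bar>ln (mix_pdf \<nu> x)\<bar> \<le> K + (norm (x - \<nu> j))\<^sup>2"
      unfolding K_def by (rule abs_ln_mix_pdf_le)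
    then show ?thesis
      using mix_pdf_pos[of \<mu>star x] by (simp add: abs_mult mult_left_mono)
  qed
  show ?thesis
    by (rule Bochner_Integration.integrable_bound[OF integrable_mix_pdf_mult_norm_sq _ AE_I2[OF bound]]) simp
qed

lemma integrable_grad_loglik_integrand:
  fixes \<mu>star \<nu> :: "'m::finite \<Rightarrow> real^'d"
  shows "integrable lborel (\<lambda>x. (mix_pdf \<mu>star x * resp \<nu> i x) *\<^sub>R (x - \<nu> i))"
proof (rule Bochner_Integration.integrable_bound)
  show "integrable lborel (\<lambda>x. mix_pdf \<mu>star x * (1 + (norm (x - \<nu> i))\<^sup>2))"
    by (rule integrable_mix_pdf_mult_norm_sq)
  show "AE x in lborel. norm ((mix_pdf \<mu>star x * resp \<nu> i x) *\<^sub>R (x - \<nu> i))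
      \<le> norm (mix_pdf \<mu>star x * (1 + (norm (x - \<nu> i))\<^sup>2))"
  proof (rule AE_I2)
    fix x
    have "2 * norm (x - \<nu> i) \<le> (norm (x - \<nu> i))\<^sup>2 + 1"
      using zero_le_power2[of "norm (x - \<nu> i) - 1"] by (simp add: power2_diff)
    then have "norm (x - \<nu> i) \<le> 1 + (norm (x - \<nu> i))\<^sup>2"
      using norm_ge_zero[of "x - \<nu> i"] by linarith
    then have "resp \<nu> i x * norm (x - \<nu> i) \<le> 1 * (1 + (norm (x - \<nu> i))\<^sup>2)"
      using resp_le_1[of \<nu> i x] by (intro mult_mono) auto
    then show "norm ((mix_pdf \<mu>star x * resp \<nu> i x) *\<^sub>R (x - \<nu> i))
        \<le> norm (mix_pdf \<mu>star x * (1 + (norm (x - \<nu> i))\<^sup>2))"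
      using mix_pdf_pos[of \<mu>star x] resp_nonneg[of \<nu> i x]
      by (simp add: abs_mult mult.assoc mult_left_mono)
  qed
qed simp

lemma gauss_pdf_translate:
  fixes x \<mu> v :: "real^'d"
  shows "gauss_pdf x (\<mu> + v) = gauss_pdf x \<mu> * exp (v \<bullet> (x - \<mu>) - (norm v)\<^sup>2 / 2)"
proof -
  have "(norm (x - (\<mu> + v)))\<^sup>2 = (norm (x - \<mu>))\<^sup>2 - 2 * (v \<bullet> (x - \<mu>)) + (norm v)\<^sup>2"
    by (simp add: power2_norm_eq_inner inner_diff_left inner_diff_right inner_add_left
        inner_add_right inner_commute algebra_simps)
  then show ?thesis
    unfolding gauss_pdf_def by (simp add: mult.assoc field_simps flip: exp_add)
qed

lemma ln_mix_pdf_translate_ge: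
  fixes \<nu> v :: "'m::finite \<Rightarrow> real^'d"
  shows "ln (mix_pdf \<nu> x) + (\<Sum>i\<in>UNIV. resp \<nu> i x * (v i \<bullet> (x - \<nu> i))) - (\<Sum>i\<in>UNIV. (norm (v i))\<^sup>2) / 2
      \<le> ln (mix_pdf (\<lambda>i. \<nu> i + v i) x)"
proof -
  define t where "t i = v i \<bullet> (x - \<nu> i) - (norm (v i))\<^sup>2 / 2" for i
  have "mix_pdf (\<lambda>i. \<nu> i + v i) x = 1 / real CARD('m) * (\<Sum>i\<in>UNIV. gauss_pdf x (\<nu> i) * exp (t i))"
    by (simp add: mix_pdf_def t_def gauss_pdf_translate)
  also have "\<dots> = (\<Sum>j\<in>UNIV. gauss_pdf x (\<nu> j)) / real CARD('m)
      * ((\<Sum>i\<in>UNIV. gauss_pdf x (\<nu> i) * exp (t i)) / (\<Sum>j\<in>UNIV. gauss_pdf x (\<nu> j)))"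
    using sum_gauss_pdf_pos[of x \<nu>] by simp
  also have "\<dots> = mix_pdf \<nu> x * (\<Sum>i\<in>UNIV. resp \<nu> i x * exp (t i))"
    by (simp add: mix_pdf_def resp_def sum_divide_distrib)
  finally have mix_translate: "mix_pdf (\<lambda>i. \<nu> i + v i) x = mix_pdf \<nu> x * (\<Sum>i\<in>UNIV. resp \<nu> i x * exp (t i))" .
  have jensen: "exp (\<Sum>i\<in>UNIV. resp \<nu> i x * t i) \<le> (\<Sum>i\<in>UNIV. resp \<nu> i x * exp (t i))"
    using convex_on_sum[OF _ _ exp_convex, of UNIV "\<lambda>i. resp \<nu> i x" t]
    by (simp add: sum_resp resp_nonneg)
  then have pos: "0 < (\<Sum>i\<in>UNIV. resp \<nu> i x * exp (t i))"
    using exp_gt_zero order_less_le_trans by blast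
  then have "(\<Sum>i\<in>UNIV. resp \<nu> i x * t i) \<le> ln (\<Sum>i\<in>UNIV. resp \<nu> i x * exp (t i))"
    using jensen by (simp add: ln_ge_iff)
  then have ln_bound: "ln (mix_pdf \<nu> x) + (\<Sum>i\<in>UNIV. resp \<nu> i x * t i) \<le> ln (mix_pdf (\<lambda>i. \<nu> i + v i) x)"
    using mix_pdf_pos[of \<nu> x] pos by (simp add: mix_translate ln_mult)
  have "resp \<nu> i x * (v i \<bullet> (x - \<nu> i)) - (norm (v i))\<^sup>2 / 2 \<le> resp \<nu> i x * t i" for i
    using mult_right_mono[OF resp_le_1[of \<nu> i x], of "(norm (v i))\<^sup>2 / 2"]
    by (simp add: t_def right_diff_distrib)
  then have "(\<Sum>i\<in>UNIV. resp \<nu> i x * (v i \<bullet> (x - \<nu> i)) - (norm (v i))\<^sup>2 / 2) \<le> (\<Sum>i\<in>UNIV. resp \<nu> i x * t i)"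
    by (rule sum_mono)
  then show ?thesis
    using ln_bound by (simp add: sum_subtractf sum_divide_distrib)
qed

lemma pop_loglik_translate_ge:
  fixes \<mu>star \<mu> v :: "'m::finite \<Rightarrow> real^'d"
  shows "pop_loglik \<mu>star \<mu> + (\<Sum>i\<in>UNIV. v i \<bullet> grad_loglik \<mu>star \<mu> i) - (\<Sum>i\<in>UNIV. (norm (v i))\<^sup>2) / 2
      \<le> pop_loglik \<mu>star (\<lambda>i. \<mu> i + v i)"
proof -
  define p where "p = mix_pdf \<mu>star"
  define F where "F i = (\<lambda>x. (p x * resp \<mu> i x) *\<^sub>R (x - \<mu> i))" for i
  define V where "V = (\<Sum>i\<in>UNIV. (norm (v i))\<^sup>2) / 2"
  have int_F: "integrable lborel (F i)" for i
    unfolding F_def p_def by (rule integrable_grad_loglik_integrand)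
  have grad_eq: "grad_loglik \<mu>star \<mu> i = integral\<^sup>L lborel (F i)" for i
    unfolding grad_loglik_def F_def p_def ..
  have int_p: "integrable lborel p"
    unfolding p_def by (rule integrable_mix_pdf)
  have "p x * ln (mix_pdf \<mu> x) + (\<Sum>i\<in>UNIV. v i \<bullet> F i x) - V * p x \<le> p x * ln (mix_pdf (\<lambda>i. \<mu> i + v i) x)" for x
  proof -
    have "p x * (ln (mix_pdf \<mu> x) + (\<Sum>i\<in>UNIV. resp \<mu> i x * (v i \<bullet> (x - \<mu> i))) - V)
        \<le> p x * ln (mix_pdf (\<lambda>i. \<mu> i + v i) x)"
      using ln_mix_pdf_translate_ge[of \<mu> x v] mix_pdf_pos[of \<mu>star x]
      by (intro mult_left_mono) (simp_all add: p_def V_def)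
    then show ?thesis
      by (simp add: F_def algebra_simps sum_distrib_left)
  qed
  moreover have int_ln: "integrable lborel (\<lambda>x. p x * ln (mix_pdf \<nu> x))" for \<nu> :: "'m \<Rightarrow> real^'d"
    unfolding p_def by (rule integrable_pop_loglik_integrand)
  moreover have int_sum: "integrable lborel (\<lambda>x. \<Sum>i\<in>UNIV. v i \<bullet> F i x)"
    using int_F by (intro Bochner_Integration.integrable_sum) auto
  moreover have int_Vp: "integrable lborel (\<lambda>x. V * p x)"
    using int_p by (rule Bochner_Integration.integrable_mult_right)
  ultimately have "(\<integral>x. p x * ln (mix_pdf \<mu> x) + (\<Sum>i\<in>UNIV. v i \<bullet> F i x) - V * p x \<partial>lborel)
      \<le> (\<integral>x. p x * ln (mix_pdf (\<lambda>i. \<mu> i + v i) x) \<partial>lborel)"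
    by (intro integral_mono Bochner_Integration.integrable_diff Bochner_Integration.integrable_add)
  moreover have "(\<integral>x. p x * ln (mix_pdf \<mu> x) + (\<Sum>i\<in>UNIV. v i \<bullet> F i x) - V * p x \<partial>lborel)
      = (\<integral>x. p x * ln (mix_pdf \<mu> x) \<partial>lborel) + (\<Sum>i\<in>UNIV. v i \<bullet> integral\<^sup>L lborel (F i))
        - V * integral\<^sup>L lborel p"
    using int_ln int_sum int_Vp int_F
    by (simp add: Bochner_Integration.integral_diff Bochner_Integration.integral_add
        Bochner_Integration.integral_sum)
  ultimately show ?thesis
    using integral_mix_pdf[of \<mu>star] by (simp add: pop_loglik_def grad_eq p_def V_def)
qed

lemma pop_loglik_gradient_step_ge:
  fixes \<mu>star \<mu> :: "'m::finite \<Rightarrow> real^'d"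
  shows "pop_loglik \<mu>star \<mu> + (s - s\<^sup>2 / 2) * grad_norm_sq \<mu>star \<mu>
      \<le> pop_loglik \<mu>star (\<lambda>i. \<mu> i + s *\<^sub>R grad_loglik \<mu>star \<mu> i)"
proof -
  have "(\<Sum>i\<in>UNIV. s *\<^sub>R grad_loglik \<mu>star \<mu> i \<bullet> grad_loglik \<mu>star \<mu> i) = s * grad_norm_sq \<mu>star \<mu>"
    by (simp add: grad_norm_sq_def sum_distrib_left power2_norm_eq_inner)
  moreover have "(\<Sum>i\<in>UNIV. (norm (s *\<^sub>R grad_loglik \<mu>star \<mu> i))\<^sup>2) = s\<^sup>2 * grad_norm_sq \<mu>star \<mu>"
    by (simp add: grad_norm_sq_def sum_distrib_left power_mult_distrib)
  ultimately show ?thesis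
    using pop_loglik_translate_ge[of \<mu>star \<mu> "\<lambda>i. s *\<^sub>R grad_loglik \<mu>star \<mu> i"]
    by (simp add: algebra_simps)
qed

lemma grad_norm_sq_nonneg: "0 \<le> grad_norm_sq \<mu>star \<mu>"
  by (simp add: grad_norm_sq_def sum_nonneg)

lemma grad_norm_sq_pos:
  assumes "grad_loglik \<mu>star \<mu> i \<noteq> 0"
  shows "0 < grad_norm_sq \<mu>star \<mu>"
proof -
  have "0 < (norm (grad_loglik \<mu>star \<mu> i))\<^sup>2"
    using assms by simp
  also have "\<dots> \<le> grad_norm_sq \<mu>star \<mu>"
    unfolding grad_norm_sq_def by (rule member_le_sum) auto
  finally show ?thesis .
qed

theorem mainTheorem7:
  fixes \<mu>star \<mu> :: "'m::finite \<Rightarrow> real^'d" and s :: real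
  assumes "0 < s" and "s < 1"
  shows "pop_loglik \<mu>star (\<lambda>i. \<mu> i + s *\<^sub>R grad_loglik \<mu>star \<mu> i)
           \<ge> pop_loglik \<mu>star \<mu> + s / 2 * grad_norm_sq \<mu>star \<mu>
         \<and> ((\<exists>i. grad_loglik \<mu>star \<mu> i \<noteq> 0) \<longrightarrow>
           pop_loglik \<mu>star (\<lambda>i. \<mu> i + s *\<^sub>R grad_loglik \<mu>star \<mu> i) > pop_loglik \<mu>star \<mu>)"
proof -
  define N where "N = grad_norm_sq \<mu>star \<mu>"
  have "s / 2 * N \<le> (s - s\<^sup>2 / 2) * N"
    using assms grad_norm_sq_nonneg unfolding N_def
    by (intro mult_right_mono) (auto simp: power2_eq_square)
  then have increase: "pop_loglik \<mu>star \<mu> + s / 2 * N \<le> pop_loglik \<mu>star (\<lambda>i. \<mu> i + s *\<^sub>R grad_loglik \<mu>star \<mu> i)"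
    using pop_loglik_gradient_step_ge[of \<mu>star \<mu> s] unfolding N_def by linarith
  have "0 < s / 2 * N" if "\<exists>i. grad_loglik \<mu>star \<mu> i \<noteq> 0"
    using that assms grad_norm_sq_pos unfolding N_def by (auto intro: mult_pos_pos)
  with increase show ?thesis
    unfolding N_def by force
qed

end
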